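(* Let $n\ge 1$ and let $a_1,\dots,a_n$ be nonnegative integers. Then, as Laurent polynomials in $z_1,\dots,z_n$, $$\mathop{\mathrm{CT}}_{\mathbf z}\frac{(z_1+\cdots+z_n)^{a_1+\cdots+a_n}}{z_1^{a_1}\cdots z_n^{a_n}}\prod_{1\le i\ne j\le n}\left(1-\frac{z_i}{z_j}\right)^{a_j}=\frac{(a_1+a_2+\cdots+a_n)!}{a_1!\,a_2!\cdots a_n!},$$ where $\mathop{\mathrm{CT}}_{\mathbf z}$ denotes the coefficient of $z_1^0\cdots z_n^0$. *)

theory Defs
  imports Complex_Main "HOL-Library.Poly_Mapping"
begin

text \<open>Laurent polynomials with integer coefficients in variables z_i (i :: nat):
  finitely supported maps from integer exponent vectors (finitely supported
  nat => int) to coefficients; multiplication is convolution.\<close>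
type_synonym laurent = "(nat \<Rightarrow>\<^sub>0 int) \<Rightarrow>\<^sub>0 int"

definition lvar :: "nat \<Rightarrow> laurent" where
  "lvar i = Poly_Mapping.single (Poly_Mapping.single i 1) 1"

definition lvar_inv :: "nat \<Rightarrow> laurent" where
  "lvar_inv i = Poly_Mapping.single (Poly_Mapping.single i (-1)) 1"

definition CT :: "laurent \<Rightarrow> int" where
  "CT p = Poly_Mapping.lookup p 0"

end

theory Submission
  imports Defs "HOL-Computational_Algebra.Polynomial_Factorial"
begin

text \<open>Write \<open>L\<^sub>j = (z\<^sub>1 + \<dots> + z\<^sub>n) z\<^sub>j\<^sup>-\<^sup>1 \<Prod>\<^sub>i\<^sub>\<noteq>\<^sub>j (1 - z\<^sub>i/z\<^sub>j)\<close>; the integrand is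
  \<open>\<Prod>\<^sub>j L\<^sub>j^a\<^sub>j\<close>. The Lagrange interpolation identity
  \<open>\<Sum>\<^sub>j z\<^sub>j\<^sup>n / \<Prod>\<^sub>i\<^sub>\<noteq>\<^sub>j (z\<^sub>j - z\<^sub>i) = z\<^sub>1 + \<dots> + z\<^sub>n\<close> says exactly that \<open>\<Sum>\<^sub>j 1/L\<^sub>j = 1\<close>, so if all
  \<open>a\<^sub>k \<ge> 1\<close> the integrand for \<open>a\<close> is the sum of the integrands for \<open>a - e\<^sub>k\<close>. If some \<open>a\<^sub>k = 0\<close>,
  the integrand is a polynomial in \<open>z\<^sub>k\<close> and its constant term does not change when \<open>z\<^sub>k\<close> is set
  to 0, which removes the variable \<open>z\<^sub>k\<close>. Hence the constant terms satisfy the recursion of the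
  multinomial coefficients.\<close>

definition lagrange_sum :: "('i \<Rightarrow> 'a::field) \<Rightarrow> 'i set \<Rightarrow> nat \<Rightarrow> 'a" where
  "lagrange_sum x S m = (\<Sum>k\<in>S. x k ^ m / (\<Prod>i\<in>S - {k}. (x k - x i)))"

lemma lagrange_sum_Suc:
  assumes "finite S" "r \<in> S" "inj_on x S"
  shows "lagrange_sum x S (Suc m) = x r * lagrange_sum x S m + lagrange_sum x (S - {r}) m"
proof -
  have "lagrange_sum x S (Suc m) - x r * lagrange_sum x S m
      = (\<Sum>k\<in>S. x k ^ m * (x k - x r) / (\<Prod>i\<in>S - {k}. (x k - x i)))"
    unfolding lagrange_sum_def
    by (simp add: sum_distrib_left sum_subtractf[symmetric] algebra_simps diff_divide_distrib)
  also have "\<dots> = (\<Sum>k\<in>S - {r}. x k ^ m * (x k - x r) / (\<Prod>i\<in>S - {k}. (x k - x i)))"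
    using assms by (subst sum.remove[of S r]) auto
  also have "\<dots> = lagrange_sum x (S - {r}) m"
    unfolding lagrange_sum_def
  proof (rule sum.cong[OF refl])
    fix k assume k: "k \<in> S - {r}"
    have "S - {k} = insert r (S - {r} - {k})" using k assms by auto
    then have "(\<Prod>i\<in>S - {k}. (x k - x i)) = (x k - x r) * (\<Prod>i\<in>S - {r} - {k}. (x k - x i))"
      using assms by simp
    moreover have "x k \<noteq> x r" using k assms by (auto simp: inj_on_def)
    ultimately show "x k ^ m * (x k - x r) / (\<Prod>i\<in>S - {k}. (x k - x i))
        = x k ^ m / (\<Prod>i\<in>S - {r} - {k}. (x k - x i))"
      by simp
  qed
  finally show ?thesis by (simp add: algebra_simps)
qed

lemma lagrange_sum_card:
  assumes "finite S" "S \<noteq> {}" "inj_on x S"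
  shows "lagrange_sum x S (card S - 1) = 1 \<and> lagrange_sum x S (card S) = sum x S"
  using assms
proof (induction "card S" arbitrary: S rule: less_induct)
  case less
  consider k where "S = {k}" | r q where "r \<in> S" "q \<in> S" "r \<noteq> q"
    using less.prems(2) by blast
  then show ?case
  proof cases
    case 1
    then show ?thesis by (simp add: lagrange_sum_def)
  next
    case (2 r q)
    define m where "m = card S - 1"
    have card_S: "card S = Suc m" using 2 less.prems(1) m_def by (cases "card S") auto
    have IH: "lagrange_sum x (S - {p}) m = sum x (S - {p})" if "p \<in> {r, q}" for p
    proof -
      have "card (S - {p}) = m" "S - {p} \<noteq> {}" "inj_on x (S - {p})"
        using that 2 less.prems card_S by (auto intro: inj_on_subset)
      then show ?thesis using less.hyps[of "S - {p}"] less.prems(1) card_S by simp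
    qed
    have step: "lagrange_sum x S (Suc m) = x p * lagrange_sum x S m + sum x (S - {p})"
      if "p \<in> {r, q}" for p
      using lagrange_sum_Suc[of S p x m] IH[OF that] that 2 less.prems by auto
    have sum_S: "sum x S = x p + sum x (S - {p})" if "p \<in> S" for p
      using that less.prems(1) by (simp add: sum.remove)
    \<comment> \<open>Comparing the recursion at two distinct points pins down the value at \<open>card S - 1\<close>.\<close>
    have "x r * lagrange_sum x S m + sum x (S - {r}) = x q * lagrange_sum x S m + sum x (S - {q})"
      using step[of r] step[of q] by simp
    moreover have "x r + sum x (S - {r}) = x q + sum x (S - {q})"
      using sum_S[OF 2(1)] sum_S[OF 2(2)] by simp
    ultimately have "(x q - x r) * lagrange_sum x S m = x q - x r" by algebra
    moreover have "x q \<noteq> x r" using 2 less.prems(3) by (auto simp: inj_on_def)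
    ultimately have "lagrange_sum x S m = 1" by (metis mult_cancel_left2 right_minus_eq)
    with step[of r] sum_S[OF 2(1)] card_S show ?thesis by simp
  qed
qed

lemma sum_inverse_interpolation_factors:
  fixes x :: "'i \<Rightarrow> 'a::field"
  assumes "finite S" "S \<noteq> {}" "inj_on x S" "\<forall>i\<in>S. x i \<noteq> 0" "sum x S \<noteq> 0"
  shows "(\<Sum>j\<in>S. inverse (sum x S * inverse (x j) * (\<Prod>i\<in>S - {j}. (1 - x i * inverse (x j))))) = 1"
proof -
  have "inverse (sum x S * inverse (x j) * (\<Prod>i\<in>S - {j}. (1 - x i * inverse (x j))))
      = x j ^ card S / (\<Prod>i\<in>S - {j}. (x j - x i)) / sum x S" if j: "j \<in> S" for j
  proof -
    have "x j \<noteq> 0" using j assms by auto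
    then have "(\<Prod>i\<in>S - {j}. (1 - x i * inverse (x j))) = (\<Prod>i\<in>S - {j}. (x j - x i) / x j)"
      by (intro prod.cong) (simp_all add: field_simps)
    also have "\<dots> = (\<Prod>i\<in>S - {j}. (x j - x i)) / x j ^ (card S - 1)"
      using assms j by (simp add: prod_dividef)
    finally show ?thesis
      using \<open>x j \<noteq> 0\<close> assms(1) j
      by (simp add: card_gt_0_iff power_eq_if inverse_mult_distrib divide_inverse mult_ac)
  qed
  then have "(\<Sum>j\<in>S. inverse (sum x S * inverse (x j) * (\<Prod>i\<in>S - {j}. (1 - x i * inverse (x j)))))
      = lagrange_sum x S (card S) / sum x S"
    unfolding lagrange_sum_def by (simp add: sum_divide_distrib)
  then show ?thesis using lagrange_sum_card[OF assms(1-3)] assms(5) by simp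
qed

lemma prod_power_eq_sum_decrements:
  fixes L :: "'i \<Rightarrow> 'a::field"
  assumes "finite S" "\<forall>j\<in>S. L j \<noteq> 0" "(\<Sum>j\<in>S. inverse (L j)) = 1" "\<forall>j\<in>S. a j \<ge> 1"
  shows "(\<Prod>j\<in>S. L j ^ a j) = (\<Sum>k\<in>S. \<Prod>j\<in>S. L j ^ (a(k := a k - 1)) j)"
proof -
  have "(\<Prod>j\<in>S. L j ^ (a(k := a k - 1)) j) = (\<Prod>j\<in>S. L j ^ a j) * inverse (L k)"
    if k: "k \<in> S" for k
  proof -
    have "a k = Suc (a k - 1)" using assms(4) k by auto
    then have "L k ^ a k = L k * L k ^ (a k - 1)" by (metis power_Suc)
    then show ?thesis
      using assms(1,2) k by (simp add: prod.remove field_simps)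
  qed
  then have "(\<Sum>k\<in>S. \<Prod>j\<in>S. L j ^ (a(k := a k - 1)) j)
      = (\<Prod>j\<in>S. L j ^ a j) * (\<Sum>k\<in>S. inverse (L k))"
    by (simp add: sum_distrib_left)
  then show ?thesis using assms(3) by simp
qed

definition multinomial :: "'i set \<Rightarrow> ('i \<Rightarrow> nat) \<Rightarrow> real" where
  "multinomial S a = fact (sum a S) / (\<Prod>i\<in>S. fact (a i))"

lemma multinomial_insert_zero:
  assumes "finite S" "k \<notin> S" "a k = 0"
  shows "multinomial (insert k S) a = multinomial S a"
  using assms by (simp add: multinomial_def)

lemma multinomial_rec:
  assumes "finite S" "S \<noteq> {}" "\<forall>j\<in>S. a j \<ge> 1"
  shows "multinomial S a = (\<Sum>k\<in>S. multinomial S (a(k := a k - 1)))"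
proof -
  define N where "N = sum a S"
  define P where "P = (\<Prod>j\<in>S. fact (a j) :: real)"
  have "multinomial S (a(k := a k - 1)) = fact (N - 1) * real (a k) / P" if k: "k \<in> S" for k
  proof -
    have ak: "a k = Suc (a k - 1)" using assms(3) k by auto
    have "sum (a(k := a k - 1)) S = a k - 1 + sum a (S - {k})"
      using assms(1) k by (simp add: sum.remove)
    also have "\<dots> = N - 1"
      using assms(1) k ak unfolding N_def by (simp add: sum.remove)
    finally have "sum (a(k := a k - 1)) S = N - 1" .
    moreover have "(\<Prod>j\<in>S. fact ((a(k := a k - 1)) j) :: real)
        = fact (a k - 1) * (\<Prod>j\<in>S - {k}. fact (a j))"
      using assms(1) k by (simp add: prod.remove)
    moreover have "P = real (a k) * fact (a k - 1) * (\<Prod>j\<in>S - {k}. fact (a j))"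
      unfolding P_def using assms(1) k ak by (metis fact_Suc prod.remove)
    moreover have "(\<Prod>j\<in>S - {k}. fact (a j) :: real) \<noteq> 0"
      using assms(1) by (simp add: prod_zero_iff)
    ultimately show ?thesis using ak unfolding multinomial_def by (simp add: field_simps)
  qed
  then have "(\<Sum>k\<in>S. multinomial S (a(k := a k - 1))) = fact (N - 1) * real N / P"
    unfolding N_def by (simp add: sum_divide_distrib[symmetric] sum_distrib_left[symmetric])
  also have "\<dots> = multinomial S a"
  proof -
    have "N > 0" using assms unfolding N_def by (auto simp: sum_eq_0_iff)
    then have "(fact N :: real) = fact (N - 1) * real N" by (subst fact_reduce) auto
    then show ?thesis unfolding multinomial_def N_def[symmetric] P_def[symmetric] by simp
  qed
  finally show ?thesis by (rule sym)
qed

text \<open>\<open>poly_in_var k\<close> singles out the polynomials in \<open>z\<^sub>k\<close> with Laurent coefficients in the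
  other variables; on them \<open>agree_at_zero k\<close> is congruence modulo \<open>z\<^sub>k\<close>, i.e. equality after
  setting \<open>z\<^sub>k = 0\<close>.\<close>

definition poly_in_var :: "'i \<Rightarrow> (('i \<Rightarrow>\<^sub>0 int) \<Rightarrow>\<^sub>0 'b::comm_ring_1) \<Rightarrow> bool" where
  "poly_in_var k p \<longleftrightarrow> (\<forall>m\<in>Poly_Mapping.keys p. Poly_Mapping.lookup m k \<ge> 0)"

definition vanishes_at_zero :: "'i \<Rightarrow> (('i \<Rightarrow>\<^sub>0 int) \<Rightarrow>\<^sub>0 'b::comm_ring_1) \<Rightarrow> bool" where
  "vanishes_at_zero k p \<longleftrightarrow> (\<forall>m\<in>Poly_Mapping.keys p. Poly_Mapping.lookup m k > 0)"

definition agree_at_zero ::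
    "'i \<Rightarrow> (('i \<Rightarrow>\<^sub>0 int) \<Rightarrow>\<^sub>0 'b::comm_ring_1) \<Rightarrow> (('i \<Rightarrow>\<^sub>0 int) \<Rightarrow>\<^sub>0 'b) \<Rightarrow> bool" where
  "agree_at_zero k p q \<longleftrightarrow> poly_in_var k p \<and> poly_in_var k q \<and> vanishes_at_zero k (p - q)"

lemma poly_in_var_if_vanishes_at_zero: "vanishes_at_zero k p \<Longrightarrow> poly_in_var k p"
  unfolding vanishes_at_zero_def poly_in_var_def by force

lemma poly_in_var_one: "poly_in_var k 1"
  unfolding poly_in_var_def by simp

lemma poly_in_var_add: "poly_in_var k p \<Longrightarrow> poly_in_var k q \<Longrightarrow> poly_in_var k (p + q)"
  unfolding poly_in_var_def using keys_add[of p q] by blast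

lemma poly_in_var_diff: "poly_in_var k p \<Longrightarrow> poly_in_var k q \<Longrightarrow> poly_in_var k (p - q)"
  unfolding diff_conv_add_uminus by (rule poly_in_var_add) (simp_all add: poly_in_var_def)

lemma poly_in_var_mult: "poly_in_var k p \<Longrightarrow> poly_in_var k q \<Longrightarrow> poly_in_var k (p * q)"
  unfolding poly_in_var_def using keys_mult[of p q] by (fastforce simp: lookup_add)

lemma poly_in_var_power: "poly_in_var k p \<Longrightarrow> poly_in_var k (p ^ n)"
  by (induction n) (simp_all add: poly_in_var_one poly_in_var_mult)

lemma poly_in_var_sum: "(\<And>i. i \<in> A \<Longrightarrow> poly_in_var k (f i)) \<Longrightarrow> poly_in_var k (sum f A)"
  by (induction A rule: infinite_finite_induct)
    (auto intro!: poly_in_var_add simp: poly_in_var_def[of k 0])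

lemma poly_in_var_prod: "(\<And>i. i \<in> A \<Longrightarrow> poly_in_var k (f i)) \<Longrightarrow> poly_in_var k (prod f A)"
  by (induction A rule: infinite_finite_induct) (auto intro: poly_in_var_mult poly_in_var_one)

lemma vanishes_at_zero_add:
  "vanishes_at_zero k p \<Longrightarrow> vanishes_at_zero k q \<Longrightarrow> vanishes_at_zero k (p + q)"
  unfolding vanishes_at_zero_def using keys_add[of p q] by blast

lemma vanishes_at_zero_uminus: "vanishes_at_zero k p \<Longrightarrow> vanishes_at_zero k (- p)"
  unfolding vanishes_at_zero_def by simp

lemma vanishes_at_zero_mult:
  "poly_in_var k p \<Longrightarrow> vanishes_at_zero k q \<Longrightarrow> vanishes_at_zero k (p * q)"
  unfolding poly_in_var_def vanishes_at_zero_def using keys_mult[of p q]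
  by (fastforce simp: lookup_add add_nonneg_pos)

lemma agree_at_zero_refl: "poly_in_var k p \<Longrightarrow> agree_at_zero k p p"
  unfolding agree_at_zero_def vanishes_at_zero_def by simp

lemma agree_at_zero_mult:
  "agree_at_zero k p q \<Longrightarrow> agree_at_zero k p' q' \<Longrightarrow> agree_at_zero k (p * p') (q * q')"
proof -
  assume "agree_at_zero k p q" "agree_at_zero k p' q'"
  moreover have "p * p' - q * q' = p * (p' - q') + q' * (p - q)" by (simp add: algebra_simps)
  ultimately show ?thesis
    unfolding agree_at_zero_def
    by (auto intro: poly_in_var_mult vanishes_at_zero_add vanishes_at_zero_mult)
qed

lemma agree_at_zero_power: "agree_at_zero k p q \<Longrightarrow> agree_at_zero k (p ^ n) (q ^ n)"
  by (induction n) (auto intro: agree_at_zero_mult agree_at_zero_refl poly_in_var_one)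

lemma agree_at_zero_prod:
  "(\<And>i. i \<in> A \<Longrightarrow> agree_at_zero k (f i) (g i)) \<Longrightarrow> agree_at_zero k (prod f A) (prod g A)"
  by (induction A rule: infinite_finite_induct)
    (auto intro: agree_at_zero_mult agree_at_zero_refl poly_in_var_one)

lemma CT_eq_if_agree_at_zero: "agree_at_zero k p q \<Longrightarrow> CT p = CT q"
proof -
  assume "agree_at_zero k p q"
  then have "0 \<notin> Poly_Mapping.keys (p - q)"
    unfolding agree_at_zero_def vanishes_at_zero_def by force
  then show ?thesis unfolding CT_def by (simp add: in_keys_iff lookup_minus)
qed

lemma lvar_mult_lvar_inv:
  "lvar i * lvar_inv j = Poly_Mapping.single (Poly_Mapping.single i 1 + Poly_Mapping.single j (-1)) 1"
  unfolding lvar_def lvar_inv_def by (simp add: mult_single)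

lemma lvar_mult_lvar_inv_self: "lvar i * lvar_inv i = 1"
  unfolding lvar_mult_lvar_inv by (simp add: single_add[symmetric])

lemma lookup_lvar:
  "Poly_Mapping.lookup (lvar j) (Poly_Mapping.single i 1) = (if j = i then 1 else 0)"
proof -
  have "Poly_Mapping.single j' (1::int) = Poly_Mapping.single i' 1 \<longleftrightarrow> j' = i'" for i' j' :: nat
    by (metis lookup_single_eq lookup_single_not_eq zero_neq_one)
  then show ?thesis unfolding lvar_def by (simp add: lookup_single when_def)
qed

lemma lvar_neq_zero: "lvar i \<noteq> 0"
  using lookup_lvar[of i i] by auto

lemma inj_lvar: "inj lvar"
proof (rule injI)
  fix i j assume "lvar i = lvar j"
  then have "Poly_Mapping.lookup (lvar j) (Poly_Mapping.single i 1) = 1"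
    using lookup_lvar[of i i] by simp
  then show "i = j" by (simp add: lookup_lvar split: if_splits)
qed

lemma sum_lvar_neq_zero:
  assumes "finite S" "i \<in> S"
  shows "(\<Sum>j\<in>S. lvar j) \<noteq> 0"
proof -
  have "Poly_Mapping.lookup (\<Sum>j\<in>S. lvar j) (Poly_Mapping.single i 1) = 1"
    using assms by (simp add: lookup_sum lookup_lvar)
  then show ?thesis by auto
qed

lemma poly_in_var_lvar: "poly_in_var k (lvar i)"
  unfolding poly_in_var_def lvar_def by (simp add: lookup_single)

lemma vanishes_at_zero_lvar: "vanishes_at_zero k (lvar k)"
  unfolding vanishes_at_zero_def lvar_def by simp

lemma poly_in_var_lvar_inv: "j \<noteq> k \<Longrightarrow> poly_in_var k (lvar_inv j)"
  unfolding poly_in_var_def lvar_inv_def by (simp add: lookup_single)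

lemma vanishes_at_zero_lvar_mult_lvar_inv: "j \<noteq> k \<Longrightarrow> vanishes_at_zero k (lvar k * lvar_inv j)"
  unfolding lvar_mult_lvar_inv vanishes_at_zero_def by (simp add: lookup_add lookup_single)

lemma to_fract_power: "to_fract (x ^ n) = to_fract x ^ n"
  by (induction n) simp_all

lemma to_fract_prod: "to_fract (prod f A) = (\<Prod>i\<in>A. to_fract (f i))"
  by (induction A rule: infinite_finite_induct) simp_all

lemma to_fract_lvar_inv: "to_fract (lvar_inv j) = inverse (to_fract (lvar j))"
proof -
  have "to_fract (lvar j) * to_fract (lvar_inv j) = 1"
    by (simp flip: to_fract_mult add: lvar_mult_lvar_inv_self)
  then show ?thesis by (rule inverse_unique[symmetric])
qed

definition integrand :: "nat set \<Rightarrow> (nat \<Rightarrow> nat) \<Rightarrow> laurent" where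
  "integrand S a = (\<Sum>i\<in>S. lvar i) ^ (\<Sum>i\<in>S. a i) * (\<Prod>i\<in>S. lvar_inv i ^ a i)
     * (\<Prod>i\<in>S. \<Prod>j\<in>S - {i}. (1 - lvar i * lvar_inv j) ^ a j)"

definition integrand_factor :: "nat set \<Rightarrow> nat \<Rightarrow> laurent" where
  "integrand_factor S j = (\<Sum>i\<in>S. lvar i) * lvar_inv j * (\<Prod>i\<in>S - {j}. (1 - lvar i * lvar_inv j))"

lemma prod_offdiag_swap:
  fixes f :: "'i \<Rightarrow> 'i \<Rightarrow> 'b::comm_monoid_mult"
  assumes "finite S"
  shows "(\<Prod>i\<in>S. \<Prod>j\<in>S - {i}. f i j) = (\<Prod>j\<in>S. \<Prod>i\<in>S - {j}. f i j)"
proof -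
  have off: "(\<Prod>j\<in>S - {i}. g j) = (\<Prod>j\<in>S. if j = i then 1 else g j)" for i and g :: "'i \<Rightarrow> 'b"
    using assms by (intro prod.mono_neutral_cong_left) auto
  have "(\<Prod>i\<in>S. \<Prod>j\<in>S - {i}. f i j) = (\<Prod>i\<in>S. \<Prod>j\<in>S. if j = i then 1 else f i j)"
    by (simp only: off)
  also have "\<dots> = (\<Prod>j\<in>S. \<Prod>i\<in>S. if j = i then 1 else f i j)"
    by (rule prod.swap)
  also have "\<dots> = (\<Prod>j\<in>S. \<Prod>i\<in>S - {j}. f i j)"
    by (rule prod.cong[OF refl]) (simp add: off eq_commute)
  finally show ?thesis .
qed

lemma integrand_eq_prod_factor:
  assumes "finite S"
  shows "integrand S a = (\<Prod>j\<in>S. integrand_factor S j ^ a j)"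
proof -
  have "(\<Prod>i\<in>S. \<Prod>j\<in>S - {i}. (1 - lvar i * lvar_inv j) ^ a j)
      = (\<Prod>j\<in>S. (\<Prod>i\<in>S - {j}. (1 - lvar i * lvar_inv j)) ^ a j)"
    by (subst prod_offdiag_swap[OF assms]) (simp add: prod_power_distrib)
  moreover have "(\<Sum>i\<in>S. lvar i) ^ (\<Sum>i\<in>S. a i) = (\<Prod>j\<in>S. (\<Sum>i\<in>S. lvar i) ^ a j)"
    by (rule power_sum)
  ultimately show ?thesis
    unfolding integrand_def integrand_factor_def
    by (simp add: prod.distrib[symmetric] power_mult_distrib)
qed

lemma agree_at_zero_integrand_insert:
  assumes "finite T" "k \<notin> T" "a k = 0"
  shows "agree_at_zero k (integrand (insert k T) a) (integrand T a)"
proof -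
  define f where "f i j = (1 - lvar i * lvar_inv j) ^ a j" for i j
  have "(\<Prod>j\<in>insert k T - {i}. f i j) = (\<Prod>j\<in>T - {i}. f i j)" if "i \<in> T" for i
  proof -
    have "insert k T - {i} = insert k (T - {i})" using that assms(2) by auto
    then show ?thesis using assms unfolding f_def by simp
  qed
  then have offdiag: "(\<Prod>i\<in>insert k T. \<Prod>j\<in>insert k T - {i}. f i j)
      = (\<Prod>j\<in>T. f k j) * (\<Prod>i\<in>T. \<Prod>j\<in>T - {i}. f i j)"
    using assms by (simp add: insert_Diff_if)
  have integrand_insert: "integrand (insert k T) a = (lvar k + (\<Sum>i\<in>T. lvar i)) ^ (\<Sum>i\<in>T. a i)
      * (\<Prod>i\<in>T. lvar_inv i ^ a i) * ((\<Prod>j\<in>T. f k j) * (\<Prod>i\<in>T. \<Prod>j\<in>T - {i}. f i j))"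
    using assms unfolding integrand_def offdiag[unfolded f_def, symmetric] f_def by simp
  have integrand_T: "integrand T a = (\<Sum>i\<in>T. lvar i) ^ (\<Sum>i\<in>T. a i)
      * (\<Prod>i\<in>T. lvar_inv i ^ a i) * ((\<Prod>j\<in>T. 1) * (\<Prod>i\<in>T. \<Prod>j\<in>T - {i}. f i j))"
    unfolding integrand_def f_def by simp
  have poly_T: "poly_in_var k (lvar_inv j)" if "j \<in> T" for j
    using that assms(2) by (auto intro: poly_in_var_lvar_inv)
  have "agree_at_zero k (lvar k + (\<Sum>i\<in>T. lvar i)) (\<Sum>i\<in>T. lvar i)"
    unfolding agree_at_zero_def
    by (auto intro: poly_in_var_add poly_in_var_sum poly_in_var_lvar vanishes_at_zero_lvar)
  moreover have "agree_at_zero k (f k j) 1" if "j \<in> T" for j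
  proof -
    have "vanishes_at_zero k (lvar k * lvar_inv j)"
      using that assms(2) by (auto intro: vanishes_at_zero_lvar_mult_lvar_inv)
    then have "agree_at_zero k (1 - lvar k * lvar_inv j) 1"
      unfolding agree_at_zero_def
      by (auto intro: poly_in_var_diff poly_in_var_one poly_in_var_if_vanishes_at_zero
          vanishes_at_zero_uminus)
    then show ?thesis unfolding f_def using agree_at_zero_power by fastforce
  qed
  moreover have "poly_in_var k (\<Prod>i\<in>T. lvar_inv i ^ a i)"
    using poly_T by (auto intro: poly_in_var_prod poly_in_var_power)
  moreover have "poly_in_var k (\<Prod>i\<in>T. \<Prod>j\<in>T - {i}. f i j)"
    unfolding f_def using poly_T
    by (auto intro!: poly_in_var_prod poly_in_var_power poly_in_var_diff poly_in_var_one
        poly_in_var_mult poly_in_var_lvar)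
  ultimately show ?thesis
    unfolding integrand_insert integrand_T
    by (intro agree_at_zero_mult agree_at_zero_power agree_at_zero_prod agree_at_zero_refl)
qed

lemma integrand_rec:
  assumes "finite S" "S \<noteq> {}" "\<forall>j\<in>S. a j \<ge> 1"
  shows "integrand S a = (\<Sum>k\<in>S. integrand S (a(k := a k - 1)))"
proof -
  define x where "x i = to_fract (lvar i)" for i
  define L where "L j = to_fract (integrand_factor S j)" for j
  have x_inj: "inj_on x S"
    unfolding x_def using inj_lvar by (auto simp: inj_on_def dest: injD)
  have x_nonzero: "\<forall>i\<in>S. x i \<noteq> 0"
    unfolding x_def by (simp add: lvar_neq_zero)
  have sum_x_nonzero: "sum x S \<noteq> 0"
    using assms(1,2) sum_lvar_neq_zero unfolding x_def by (auto simp flip: to_fract_sum)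
  have L_eq: "L j = sum x S * inverse (x j) * (\<Prod>i\<in>S - {j}. (1 - x i * inverse (x j)))" for j
    unfolding L_def integrand_factor_def x_def by (simp add: to_fract_prod to_fract_lvar_inv)
  have "L j \<noteq> 0" if j: "j \<in> S" for j
  proof -
    have "1 - x i * inverse (x j) \<noteq> 0" if "i \<in> S - {j}" for i
      using that j x_inj x_nonzero by (auto simp: inj_on_def field_simps)
    then show ?thesis using j x_nonzero sum_x_nonzero assms(1) unfolding L_eq by simp
  qed
  moreover have "(\<Sum>j\<in>S. inverse (L j)) = 1"
    unfolding L_eq using assms(1,2) x_inj x_nonzero sum_x_nonzero
    by (rule sum_inverse_interpolation_factors)
  ultimately have "(\<Prod>j\<in>S. L j ^ a j) = (\<Sum>k\<in>S. \<Prod>j\<in>S. L j ^ (a(k := a k - 1)) j)"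
    using assms(1,3) by (intro prod_power_eq_sum_decrements) auto
  then have "to_fract (integrand S a) = to_fract (\<Sum>k\<in>S. integrand S (a(k := a k - 1)))"
    unfolding integrand_eq_prod_factor[OF assms(1)] L_def by (simp add: to_fract_prod to_fract_power)
  then show ?thesis by (simp only: to_fract_eq_iff)
qed

lemma CT_integrand:
  "finite S \<Longrightarrow> real_of_int (CT (integrand S a)) = multinomial S a"
proof (induction "card S + sum a S" arbitrary: S a rule: less_induct)
  case less
  consider "S = {}" | k where "k \<in> S" "a k = 0" | "S \<noteq> {}" "\<forall>j\<in>S. a j \<ge> 1"
    by (metis less_one not_le)
  then show ?case
  proof cases
    case 1
    then show ?thesis by (simp add: integrand_def multinomial_def CT_def)
  next
    case (2 k)
    define T where "T = S - {k}"
    have S: "S = insert k T" "finite T" "k \<notin> T" using 2 less.prems unfolding T_def by auto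
    have "card T + sum a T < card S + sum a S" using S 2 by simp
    then have "real_of_int (CT (integrand T a)) = multinomial T a" using less S by blast
    moreover have "CT (integrand S a) = CT (integrand T a)"
      unfolding S(1) using agree_at_zero_integrand_insert[of T k a] S 2(2)
      by (auto intro: CT_eq_if_agree_at_zero)
    ultimately show ?thesis
      unfolding S(1) multinomial_insert_zero[of T k a, OF S(2,3) 2(2)] by simp
  next
    case 3
    have "real_of_int (CT (integrand S (a(k := a k - 1)))) = multinomial S (a(k := a k - 1))"
      if "k \<in> S" for k
    proof -
      have "sum (a(k := a k - 1)) S < sum a S"
        using that 3 less.prems by (simp add: sum.remove Suc_le_eq)
      then show ?thesis using less by simp
    qed
    then show ?thesis
      using integrand_rec[OF less.prems 3] multinomial_rec[OF less.prems 3]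
      by (simp add: CT_def lookup_sum)
  qed
qed

theorem mainTheorem18:
  fixes n :: nat and a :: "nat \<Rightarrow> nat"
  assumes "n \<ge> 1"
  shows "real_of_int (CT ((\<Sum>i\<in>{1..n}. lvar i) ^ (\<Sum>i\<in>{1..n}. a i)
            * (\<Prod>i\<in>{1..n}. lvar_inv i ^ a i)
            * (\<Prod>i\<in>{1..n}. \<Prod>j\<in>{1..n} - {i}. (1 - lvar i * lvar_inv j) ^ a j)))
         = fact (\<Sum>i\<in>{1..n}. a i) / (\<Prod>i\<in>{1..n}. fact (a i))"
  using CT_integrand[of "{1..n}" a] unfolding integrand_def multinomial_def by simp

end
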